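(* The substring complexity $\delta$ satisfies the following upper bounds on its sensitivity: substitutions: $\mathsf{MS}_{\mathrm{sub}}(\delta,n) \leq 2$ and $\mathsf{AS}_{\mathrm{sub}}(\delta,n) \leq 1$; insertions: $\mathsf{MS}_{\mathrm{ins}}(\delta,n) \leq 2$ and $\mathsf{AS}_{\mathrm{ins}}(\delta,n) \leq 1$; deletions: $\limsup_{n\to\infty}\mathsf{MS}_{\mathrm{del}}(\delta,n) \leq 1.5$ and $\limsup_{n\to\infty}\mathsf{AS}_{\mathrm{del}}(\delta,n) \leq 1$.
   Context: Strings are finite sequences over an alphabet $\Sigma$; $\Sigma^n$ is the set of strings of length $n$. $\mathsf{ed}(T,S)$ is the edit distance (minimum number of single-character substitutions, insertions, deletions turning $T$ into $S$). For a measure $C$ assigning a number $C(T)$ to each string, define $\mathsf{MS}_{\mathrm{sub}}(C,n)=\max_{T\in\Sigma^n}\{C(T')/C(T): T'\in\Sigma^n,\ \mathsf{ed}(T,T')=1\}$, $\mathsf{MS}_{\mathrm{ins}}(C,n)$ and $\mathsf{MS}_{\mathrm{del}}(C,n)$ the same with $T'\in\Sigma^{n+1}$, resp. $T'\in\Sigma^{n-1}$; and $\mathsf{AS}_{\mathrm{sub}},\mathsf{AS}_{\mathrm{ins}},\mathsf{AS}_{\mathrm{del}}$ the same with $C(T')-C(T)$ in place of $C(T')/C(T)$. For a string $T$ of length $n$, $\mathsf{Substr}(T,k)$ is the number of distinct substrings of length $k$ of $T$, and the substring complexity is $\delta(T)=\max_{1\le k\le n}\mathsf{Substr}(T,k)/k$.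 *)

theory Defs
  imports Complex_Main "HOL-Library.Extended_Real" "HOL-Library.Liminf_Limsup"
begin

definition edit1 :: "'a list \<Rightarrow> 'a list \<Rightarrow> bool" where
  "edit1 T S \<longleftrightarrow>
     (\<exists>u v a b. T = u @ a # v \<and> S = u @ b # v) \<or>
     (\<exists>u v b. T = u @ v \<and> S = u @ b # v) \<or>
     (\<exists>u v a. T = u @ a # v \<and> S = u @ v)"

definition ed :: "'a list \<Rightarrow> 'a list \<Rightarrow> nat" where
  "ed T S = (LEAST k. (edit1 ^^ k) T S)"

definition Substr :: "'a list \<Rightarrow> nat \<Rightarrow> nat" where
  "Substr T k = card {take k (drop i T) | i. i + k \<le> length T}"

definition delta :: "'a list \<Rightarrow> real" where
  "delta T = (if T = [] then 0
              else Max {real (Substr T k) / real k | k. k \<in> {1..length T}})"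

definition MS_sub :: "('a list \<Rightarrow> real) \<Rightarrow> nat \<Rightarrow> ereal" where
  "MS_sub C n = Sup {ereal (C T' / C T) | T T'. length T = n \<and> length T' = n \<and> ed T T' = 1}"
definition MS_ins :: "('a list \<Rightarrow> real) \<Rightarrow> nat \<Rightarrow> ereal" where
  "MS_ins C n = Sup {ereal (C T' / C T) | T T'. length T = n \<and> length T' = n + 1 \<and> ed T T' = 1}"
definition MS_del :: "('a list \<Rightarrow> real) \<Rightarrow> nat \<Rightarrow> ereal" where
  "MS_del C n = Sup {ereal (C T' / C T) | T T'. length T = n \<and> length T' + 1 = n \<and> ed T T' = 1}"
definition AS_sub :: "('a list \<Rightarrow> real) \<Rightarrow> nat \<Rightarrow> ereal" where
  "AS_sub C n = Sup {ereal (C T' - C T) | T T'. length T = n \<and> length T' = n \<and> ed T T' = 1}"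
definition AS_ins :: "('a list \<Rightarrow> real) \<Rightarrow> nat \<Rightarrow> ereal" where
  "AS_ins C n = Sup {ereal (C T' - C T) | T T'. length T = n \<and> length T' = n + 1 \<and> ed T T' = 1}"
definition AS_del :: "('a list \<Rightarrow> real) \<Rightarrow> nat \<Rightarrow> ereal" where
  "AS_del C n = Sup {ereal (C T' - C T) | T T'. length T = n \<and> length T' + 1 = n \<and> ed T T' = 1}"

end

theory Submission imports Defs begin

text \<open>A single edit changes only the length-\<open>k\<close> windows that overlap the edited
position, so it creates at most \<open>k\<close> new distinct substrings of length \<open>k\<close>; dividing
by \<open>k\<close> gives \<open>\<delta>(T') \<le> \<delta>(T) + 1\<close>. Since \<open>\<delta>(T) \<ge> 1\<close> for nonempty \<open>T\<close>,
this yields the additive bound 1 and the multiplicative bound 2. For a deletion,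
either \<open>\<delta>(T) \<ge> 2\<close>, so that \<open>(\<delta>(T) + 1) / \<delta>(T) \<le> 3/2\<close>, or \<open>T\<close> is a power of a
single letter, and then so is \<open>T'\<close> and \<open>\<delta>(T') \<le> 1 \<le> \<delta>(T)\<close>. These bounds hold for
every \<open>n\<close>, hence also for the \<open>lim sup\<close>.\<close>

lemma edit1_relpowp_length: "(edit1 ^^ (length T + length T')) T T'"
proof -
  have delete_all: "(edit1 ^^ length T) T []" for T :: "'a list"
  proof (induction T)
    case (Cons a T)
    have "edit1 (a # T) T" unfolding edit1_def by (metis append_Nil)
    with Cons show ?case by (metis length_Cons relpowp_Suc_I2)
  qed simp
  have insert_all: "(edit1 ^^ length T') [] T'" for T' :: "'a list"
  proof (induction T')
    case (Cons b T')
    have "edit1 T' (b # T')" unfolding edit1_def by (metis append_Nil)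
    with Cons show ?case by (metis length_Cons relpowp_Suc_I)
  qed simp
  show ?thesis unfolding relpowp_add using delete_all insert_all by blast
qed

lemma edit1_if_ed_eq_1: assumes "ed T T' = 1" shows "edit1 T T'"
proof -
  have "(edit1 ^^ ed T T') T T'"
    unfolding ed_def by (rule LeastI_ex) (use edit1_relpowp_length in blast)
  with assms show ?thesis by auto
qed

lemma edit1_factor_replace:
  assumes "edit1 T T'"
  obtains u m m' v where "T = u @ m @ v" "T' = u @ m' @ v" "length m \<le> 1" "length m' \<le> 1"
proof -
  consider (sub) u v a b where "T = u @ [a] @ v" "T' = u @ [b] @ v"
    | (ins) u v b where "T = u @ [] @ v" "T' = u @ [b] @ v"
    | (del) u v a where "T = u @ [a] @ v" "T' = u @ [] @ v"
    using assms unfolding edit1_def by (metis append_Cons append_Nil)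
  then show ?thesis by cases (erule (1) that; simp)+
qed

lemma set_subset_if_edit1_shorter:
  assumes "edit1 T T'" "length T' < length T"
  shows "set T' \<subseteq> set T"
proof -
  obtain u m m' v where "T = u @ m @ v" "T' = u @ m' @ v" "length m \<le> 1" "length m' \<le> 1"
    using edit1_factor_replace[OF assms(1)] .
  moreover from this assms(2) have "length m' < length m" by simp
  with \<open>length m \<le> 1\<close> have "m' = []" by (auto simp: le_Suc_eq)
  ultimately show ?thesis by auto
qed

lemma Substr_eq_card_image: "Substr T k = card ((\<lambda>i. take k (drop i T)) ` {i. i + k \<le> length T})"
  unfolding Substr_def by (simp add: setcompr_eq_image)

lemma window_starts_eq: "{i::nat. i + k \<le> n} = {..<n + 1 - k}"
  by auto

lemma Substr_le_windows: "Substr T k \<le> length T + 1 - k"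
  unfolding Substr_eq_card_image window_starts_eq
  by (metis card_image_le card_lessThan finite_lessThan)

lemma Substr_le_card_set_power: "Substr T k \<le> card (set T) ^ k"
proof -
  have "{take k (drop i T) | i. i + k \<le> length T} \<subseteq> {xs. set xs \<subseteq> set T \<and> length xs = k}"
    by (auto dest: in_set_takeD in_set_dropD)
  then have "Substr T k \<le> card {xs. set xs \<subseteq> set T \<and> length xs = k}"
    unfolding Substr_def by (intro card_mono finite_lists_length_eq) auto
  then show ?thesis by (simp add: card_lists_length_eq)
qed

lemma Substr_1: "Substr T 1 = card (set T)"
proof -
  have "{take 1 (drop i T) | i. i + 1 \<le> length T} = (\<lambda>x. [x]) ` set T"
  proof (intro equalityI subsetI)
    fix y assume "y \<in> {take 1 (drop i T) | i. i + 1 \<le> length T}"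
    then obtain i where "i < length T" "y = take 1 (drop i T)" by (auto simp: Suc_le_eq)
    then show "y \<in> (\<lambda>x. [x]) ` set T" by (simp add: Cons_nth_drop_Suc[symmetric])
  next
    fix y assume "y \<in> (\<lambda>x. [x]) ` set T"
    then obtain i where "i < length T" "y = [T ! i]" by (auto simp: in_set_conv_nth)
    then have "y = take 1 (drop i T)" "i + 1 \<le> length T" by (simp_all add: Cons_nth_drop_Suc[symmetric])
    then show "y \<in> {take 1 (drop i T) | i. i + 1 \<le> length T}" by blast
  qed
  then show ?thesis unfolding Substr_def by (simp add: card_image inj_on_def)
qed

text \<open>The new windows are those starting in \<open>[|u| + 1 - k, |u| + |m'|)\<close>; all other
windows of \<open>u @ m' @ v\<close> are windows of \<open>u @ m @ v\<close>, shifted by \<open>|m| - |m'|\<close> when they lie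
to the right of \<open>m'\<close>.\<close>
lemma Substr_replace_factor_le:
  "Substr (u @ m' @ v) k \<le> Substr (u @ m @ v) k + (length m' + k - 1)"
proof -
  define T T' where "T = u @ m @ v" and "T' = u @ m' @ v"
  let ?W = "\<lambda>S i. take k (drop i S)"
  let ?old = "?W T ` {i. i + k \<le> length T}"
  let ?New = "{length u + 1 - k..<length u + length m'}"
  have "?W T' ` {i. i + k \<le> length T'} \<subseteq> ?old \<union> ?W T' ` ?New"
  proof
    fix x assume "x \<in> ?W T' ` {i. i + k \<le> length T'}"
    then obtain i where i: "i + k \<le> length T'" and x: "x = ?W T' i" by auto
    consider "i + k \<le> length u" | "length u + length m' \<le> i" | "i \<in> ?New" by fastforce
    then show "x \<in> ?old \<union> ?W T' ` ?New"
    proof cases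
      case 1
      then have "?W T' i = ?W T i" "i + k \<le> length T"
        unfolding T_def T'_def by (simp_all add: drop_append take_append)
      with x show ?thesis by blast
    next
      case 2
      define j where "j = i - length m' + length m"
      have "drop i T' = drop (i - length u - length m') v" "drop j T = drop (i - length u - length m') v"
        using 2 unfolding T_def T'_def j_def by (simp_all add: drop_append add.commute)
      then have "?W T' i = ?W T j" by simp
      moreover have "j + k \<le> length T" using i 2 unfolding T_def T'_def j_def by simp
      ultimately show ?thesis using x by blast
    qed (use x in blast)
  qed
  then have "Substr T' k \<le> card (?old \<union> ?W T' ` ?New)"
    unfolding Substr_eq_card_image by (intro card_mono) (simp_all add: window_starts_eq)
  also have "\<dots> \<le> card ?old + card (?W T' ` ?New)" by (rule card_Un_le)
  also have "card (?W T' ` ?New) \<le> card ?New" by (rule card_image_le) simp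
  also have "card ?New \<le> length m' + k - 1" by simp
  finally show ?thesis unfolding T_def T'_def Substr_eq_card_image by simp
qed

lemma Substr_edit1_le: assumes "edit1 T T'" shows "Substr T' k \<le> Substr T k + k"
proof -
  obtain u m m' v where "T = u @ m @ v" "T' = u @ m' @ v" "length m' \<le> 1"
    using edit1_factor_replace[OF assms] by metis
  then show ?thesis using Substr_replace_factor_le[of u m' v k m] by simp
qed

lemma Substr_div_le_delta:
  assumes "1 \<le> k" "k \<le> length T"
  shows "real (Substr T k) / real k \<le> delta T"
proof -
  have "real (Substr T k) / real k \<in> {real (Substr T k) / real k | k. k \<in> {1..length T}}"
    using assms by auto
  moreover have "finite {real (Substr T k) / real k | k. k \<in> {1..length T}}"
    by (simp add: setcompr_eq_image)
  ultimately show ?thesis unfolding delta_def using assms by (auto intro: Max_ge)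
qed

lemma delta_le:
  assumes "T \<noteq> []" "\<And>k. 1 \<le> k \<Longrightarrow> k \<le> length T \<Longrightarrow> real (Substr T k) / real k \<le> c"
  shows "delta T \<le> c"
proof -
  have "{real (Substr T k) / real k | k. k \<in> {1..length T}} \<noteq> {}"
    using assms(1) by (auto simp: Suc_le_eq)
  with assms show ?thesis unfolding delta_def by (auto simp: setcompr_eq_image)
qed

lemma card_set_le_delta: "real (card (set T)) \<le> delta T"
proof (cases "T = []")
  case False
  then have "real (Substr T 1) / real 1 \<le> delta T" by (intro Substr_div_le_delta) (auto simp: Suc_le_eq)
  then show ?thesis using Substr_1[of T] by simp
qed (simp add: delta_def)

lemma one_le_delta: "T \<noteq> [] \<Longrightarrow> 1 \<le> delta T"
  using card_set_le_delta[of T] by (simp add: Suc_le_eq card_gt_0_iff order.trans[rotated])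

lemma delta_nonneg: "0 \<le> delta T"
  using one_le_delta[of T] by (cases "T = []") (simp_all add: delta_def)

lemma delta_le_1_if_card_set_le_1:
  assumes "card (set T) \<le> 1"
  shows "delta T \<le> 1"
proof (cases "T = []")
  case False
  then show ?thesis
  proof (rule delta_le)
    fix k :: nat assume "1 \<le> k"
    moreover have "Substr T k \<le> 1"
      using Substr_le_card_set_power[of T k] assms by (metis le_trans one_le_power power_one power_mono zero_le)
    ultimately show "real (Substr T k) / real k \<le> 1" by simp
  qed
qed (simp add: delta_def)

lemma delta_edit1_le: assumes "edit1 T T'" shows "delta T' \<le> delta T + 1"
proof (cases "T' = []")
  case True then show ?thesis using delta_nonneg[of T] by (simp add: delta_def)
next
  case False
  show ?thesis
  proof (rule delta_le[OF False])
    fix k :: nat assume "1 \<le> k"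
    then have "real (Substr T' k) / real k \<le> (real (Substr T k) + real k) / real k"
      using Substr_edit1_le[OF assms, of k] by (intro divide_right_mono) simp_all
    also have "\<dots> = real (Substr T k) / real k + 1" using \<open>1 \<le> k\<close> by (simp add: add_divide_distrib)
    also have "real (Substr T k) / real k \<le> delta T"
    proof (cases "k \<le> length T")
      case True
      with \<open>1 \<le> k\<close> show ?thesis by (rule Substr_div_le_delta)
    next
      case False
      then have "Substr T k = 0" using Substr_le_windows[of T k] by simp
      then show ?thesis using delta_nonneg[of T] by simp
    qed
    finally show "real (Substr T' k) / real k \<le> delta T + 1" by simp
  qed
qed

lemma delta_edit1_ratio_le_2:
  assumes "edit1 T T'" "T \<noteq> []"
  shows "delta T' / delta T \<le> 2"
  using delta_edit1_le[OF assms(1)] one_le_delta[OF assms(2)] by (simp add: divide_le_eq)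

lemma delta_deletion_ratio_le:
  assumes "edit1 T T'" "length T' < length T"
  shows "delta T' / delta T \<le> 3/2"
proof -
  have one_le: "1 \<le> delta T" using assms(2) by (intro one_le_delta) auto
  have "delta T' \<le> 3/2 * delta T"
  proof (cases "2 \<le> delta T")
    case True then show ?thesis using delta_edit1_le[OF assms(1)] by linarith
  next
    case False
    then have "card (set T) \<le> 1" using card_set_le_delta[of T] by simp
    moreover have "card (set T') \<le> card (set T)"
      using set_subset_if_edit1_shorter[OF assms] by (simp add: card_mono)
    ultimately have "delta T' \<le> 1" by (intro delta_le_1_if_card_set_le_1) simp
    then show ?thesis using one_le by linarith
  qed
  with one_le show ?thesis by (simp add: divide_le_eq)
qed

theorem mainTheorem2:
  shows "(\<forall>n\<ge>1. MS_sub (delta :: 'a list \<Rightarrow> real) n \<le> 2 \<and> AS_sub (delta :: 'a list \<Rightarrow> real) n \<le> 1 \<and>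
                MS_ins (delta :: 'a list \<Rightarrow> real) n \<le> 2 \<and> AS_ins (delta :: 'a list \<Rightarrow> real) n \<le> 1) \<and>
         limsup (\<lambda>n. MS_del (delta :: 'a list \<Rightarrow> real) n) \<le> ereal (3/2) \<and>
         limsup (\<lambda>n. AS_del (delta :: 'a list \<Rightarrow> real) n) \<le> 1"
proof -
  have additive: "ereal (delta T' - delta T) \<le> 1" if "ed T T' = 1" for T T' :: "'a list"
    using delta_edit1_le[OF edit1_if_ed_eq_1[OF that]] by simp
  have multiplicative: "ereal (delta T' / delta T) \<le> 2"
    if "ed T T' = 1" "1 \<le> length T" for T T' :: "'a list"
    using delta_edit1_ratio_le_2[OF edit1_if_ed_eq_1[OF that(1)]] that(2) by (simp add: Suc_le_eq)
  have deletion: "ereal (delta T' / delta T) \<le> ereal (3/2)"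
    if "ed T T' = 1" "length T' + 1 = length T" for T T' :: "'a list"
    using delta_deletion_ratio_le[OF edit1_if_ed_eq_1[OF that(1)]] that(2) by simp
  have "MS_del (delta :: 'a list \<Rightarrow> real) n \<le> ereal (3/2)" "AS_del (delta :: 'a list \<Rightarrow> real) n \<le> 1" for n
    unfolding MS_del_def AS_del_def using deletion additive by (auto intro!: Sup_least)
  then show ?thesis
    unfolding MS_sub_def AS_sub_def MS_ins_def AS_ins_def
    using additive multiplicative by (auto intro!: Sup_least Limsup_bounded)
qed

end
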